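(* Let $G$ be a triangular graph and run the procedure described in the context on $G$, starting with two vertices of the outer triangle as the distinguished vertices $v_1,v_2$ (clockwise consecutive, with the edge $v_1v_2$ given some orientation). Then in the resulting orientation every interior vertex of $G$ has in-degree exactly $3$; that is, the restriction of the constructed orientation to the interior edges of $G$ is an internal $3$-orientation.
   Context: A triangular graph is a plane graph with at least 3 vertices all of whose faces, including the outer one, are triangles; its interior vertices/edges are those not on the outer triangle. A near triangulation is a 2-connected plane graph whose outer face is bounded by a cycle (the outer cycle) and all of whose inner faces are triangles. An internal 3-orientation of a triangular graph is an orientation of its interior edges in which every interior vertex has in-degree exactly 3. The procedure: its input is a near triangulation $H$ with two distinguished vertices $v_1,v_2$ such that $v_2$ immediately follows $v_1$ clockwise on the outer cycle; the edge $v_1v_2$ is already oriented, other edges are not. It orients every edge and gives each edge a strength 1 or 2, as follows. (Recursive step) If the outer cycle has a chord $v_av_b$, it splits the outer cycle into cycles $C_1$ (containing $v_1,v_2$) and $C_2$; let $H_1,H_2$ be the subgraphs formed by $C_1$, $C_2$ with their interiors. Run the procedure first on $H_1$ with distinguished vertices $v_1,v_2$, and then on $H_2$ with the endpoints of the chord as distinguished vertices, ordered so that the second immediately follows the first clockwise on the outer cycle of $H_2$ (the chord has been oriented during the run on $H_1$). (Orienting step) If the outer cycle has no chord, let $v_3$ be the vertex immediately following $v_2$ clockwise on the outer cycle (the central vertex). Every edge of the current graph incident to $v_3$ that lies on the outer cycle is oriented towards $v_3$ and given strength 1; every other edge of the current graph incident to $v_3$ is oriented away from $v_3$ and given strength 2.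 Then $v_3$ is deleted, and if vertices other than $v_1,v_2$ remain, the procedure is called recursively on the remaining graph with the same distinguished vertices $v_1,v_2$. *)

theory Defs
  imports Main
begin

text \<open>A plane graph all of whose faces are triangles is represented by the set T of its
  faces, each face being recorded as an oriented triple (a,b,c) of its boundary
  vertices, together with all its cyclic rotations.  All faces are oriented
  coherently (orientation of the sphere), with the convention that the inner faces
  (all faces except the outer one) list their vertices in clockwise order in the
  plane.\<close>

definition darts :: "('v \<times> 'v \<times> 'v) set \<Rightarrow> ('v \<times> 'v) set" where
  "darts T = {(a,b). \<exists>c. (a,b,c) \<in> T}"

definition verts :: "('v \<times> 'v \<times> 'v) set \<Rightarrow> 'v set" where
  "verts T = {a. \<exists>b c. (a,b,c) \<in> T}"

definition edges :: "('v \<times> 'v \<times> 'v) set \<Rightarrow> 'v set set" where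
  "edges T = {{a,b} | a b. (a,b) \<in> darts T}"

definition link :: "('v \<times> 'v \<times> 'v) set \<Rightarrow> 'v \<Rightarrow> ('v \<times> 'v) set" where
  "link T v = {(u,w). (v,u,w) \<in> T}"

text \<open>Triangular graph: a simple plane graph with at least 3 vertices all of whose
  faces (including the outer one) are triangles, i.e. a coherently oriented
  triangulation of the 2-sphere: every dart lies in exactly one face, every edge has
  two sides, the link of every vertex is a single cycle (no pinched vertices), the
  graph is connected, and Euler's formula V - E + F = 2 holds.\<close>
definition triangular_graph :: "('v \<times> 'v \<times> 'v) set \<Rightarrow> bool" where
  "triangular_graph T \<longleftrightarrow>
     finite T \<and> card (verts T) \<ge> 3 \<and>
     (\<forall>a b c. (a,b,c) \<in> T \<longrightarrow> a \<noteq> b \<and> b \<noteq> c \<and> a \<noteq> c) \<and>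
     (\<forall>a b c. (a,b,c) \<in> T \<longrightarrow> (b,c,a) \<in> T) \<and>
     (\<forall>a b c c'. (a,b,c) \<in> T \<longrightarrow> (a,b,c') \<in> T \<longrightarrow> c = c') \<and>
     (\<forall>a b. (a,b) \<in> darts T \<longrightarrow> (b,a) \<in> darts T) \<and>
     (\<forall>v u w. (v,u) \<in> darts T \<longrightarrow> (v,w) \<in> darts T \<longrightarrow> (u,w) \<in> (link T v)\<^sup>*) \<and>
     (\<forall>x\<in>verts T. \<forall>y\<in>verts T. (x,y) \<in> (darts T)\<^sup>*) \<and>
     int (card (verts T)) - int (card (edges T)) + int (card T div 3) = 2"

text \<open>Near triangulations arising in the procedure are subgraphs of the triangular
  graph formed by a cycle and its interior; such a subgraph is represented by its set
  F of (clockwise oriented) inner faces.  Its outer cycle consists of the boundary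
  darts, traversed clockwise: (a,b) is a boundary dart iff b immediately follows a
  clockwise on the outer cycle.\<close>
definition bdarts :: "('v \<times> 'v \<times> 'v) set \<Rightarrow> ('v \<times> 'v) set" where
  "bdarts F = {(a,b). (a,b) \<in> darts F \<and> (b,a) \<notin> darts F}"

definition bverts :: "('v \<times> 'v \<times> 'v) set \<Rightarrow> 'v set" where
  "bverts F = {a. \<exists>b. (a,b) \<in> bdarts F}"

definition is_chord :: "('v \<times> 'v \<times> 'v) set \<Rightarrow> 'v \<Rightarrow> 'v \<Rightarrow> bool" where
  "is_chord F x y \<longleftrightarrow> x \<in> bverts F \<and> y \<in> bverts F \<and> {x,y} \<in> edges F \<and>
     (x,y) \<notin> bdarts F \<and> (y,x) \<notin> bdarts F"

definition rot_closed :: "('v \<times> 'v \<times> 'v) set \<Rightarrow> bool" where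
  "rot_closed F \<longleftrightarrow> (\<forall>a b c. (a,b,c) \<in> F \<longrightarrow> (b,c,a) \<in> F)"

text \<open>Arcs oriented in the orienting step at central vertex z: edges of the current
  graph at z lying on the outer cycle are oriented towards z, all other edges at z
  away from z.  (Strengths are not recorded; they do not influence orientations.)\<close>
definition orient_at :: "('v \<times> 'v \<times> 'v) set \<Rightarrow> 'v \<Rightarrow> ('v \<times> 'v) set" where
  "orient_at F z =
     {(u,z) | u. {u,z} \<in> edges F \<and> ((u,z) \<in> bdarts F \<or> (z,u) \<in> bdarts F)} \<union>
     {(z,u) | u. {u,z} \<in> edges F \<and> (u,z) \<notin> bdarts F \<and> (z,u) \<notin> bdarts F}"

text \<open>proc F v1 v2 O: some run of the procedure on the near triangulation with inner
  face set F and distinguished vertices v1, v2 orients the edges as in the arc set O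
  (the pre-oriented edge v1v2 is not included in O).\<close>
inductive proc :: "('v \<times> 'v \<times> 'v) set \<Rightarrow> 'v \<Rightarrow> 'v \<Rightarrow> ('v \<times> 'v) set \<Rightarrow> bool" where
  chord_step:
    "\<lbrakk> (v1,v2) \<in> bdarts F; is_chord F x y;
       F = F1 \<union> F2; F1 \<inter> F2 = {}; F1 \<noteq> {}; F2 \<noteq> {}; rot_closed F1; rot_closed F2;
       edges F1 \<inter> edges F2 = {{x,y}};
       (v1,v2) \<in> bdarts F1; (x,y) \<in> bdarts F2;
       proc F1 v1 v2 Or1; proc F2 x y Or2 \<rbrakk>
     \<Longrightarrow> proc F v1 v2 (Or1 \<union> Or2)"
| orient_last:
    "\<lbrakk> (v1,v2) \<in> bdarts F; \<not> (\<exists>x y. is_chord F x y); (v2,z) \<in> bdarts F;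
       {t \<in> F. z \<notin> {fst t, fst (snd t), snd (snd t)}} = {} \<rbrakk>
     \<Longrightarrow> proc F v1 v2 (orient_at F z)"
| orient_step:
    "\<lbrakk> (v1,v2) \<in> bdarts F; \<not> (\<exists>x y. is_chord F x y); (v2,z) \<in> bdarts F;
       F' = {t \<in> F. z \<notin> {fst t, fst (snd t), snd (snd t)}}; F' \<noteq> {};
       proc F' v1 v2 Or' \<rbrakk>
     \<Longrightarrow> proc F v1 v2 (orient_at F z \<union> Or')"

end

theory Submission
  imports Defs
begin

text \<open>The procedure maintains an invariant: a run on a near triangulation F with distinguished
  outer edge v1v2 orients every other edge of F exactly once, so that inner vertices get
  in-degree 3, outer vertices in-degree 2, and v1, v2 in-degree 0.  At a chord the invariants
  of the two halves add up, because the endpoints of the chord are the distinguished vertices of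
  the second half and every other vertex lies in only one half.  At an orienting step the
  central vertex z receives its two outer edges, which gives it in-degree 2, and sends out all
  its inner edges; after deleting z its outer neighbours stay outer, while its inner neighbours
  become outer and have just received one arc from z, so 2 = 0 + 2 and 3 = 1 + 2.  Deleting the
  outer face of the triangular graph gives a near triangulation whose inner vertices are its
  interior vertices.

  Faces are oriented triples, and connectivity of every vertex link replaces the topology:
  it gives each outer vertex exactly one outgoing and one incoming outer dart, and it lets an
  inner vertex keep its whole cyclic link from the triangular graph.\<close>


section \<open>Relations whose symmetric closure is connected\<close>

definition sym_connected :: "('a \<times> 'a) set \<Rightarrow> bool" where
  "sym_connected R \<longleftrightarrow> (\<forall>u \<in> Field R. \<forall>w \<in> Field R. (u,w) \<in> (R \<union> R\<inverse>)\<^sup>*)"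

lemma sym_reach_sym: "(x,y) \<in> (R \<union> R\<inverse>)\<^sup>* \<Longrightarrow> (y,x) \<in> (R \<union> R\<inverse>)\<^sup>*"
  by (rule symD[OF sym_rtrancl[OF sym_Un_converse]])

lemma rtrancl_into_sym_reach: "(x,y) \<in> R\<^sup>* \<Longrightarrow> (x,y) \<in> (R \<union> R\<inverse>)\<^sup>*"
  by (simp add: in_rtrancl_UnI)

lemma sym_reach_Field: "(u,t) \<in> (R \<union> R\<inverse>)\<^sup>* \<Longrightarrow> u \<in> Field R \<Longrightarrow> t \<in> Field R"
  by (induction rule: rtrancl_induct) (auto simp: Field_def)

lemma sym_reach_Un_cases:
  assumes "u \<in> Field R1" and "(u,t) \<in> ((R1 \<union> R2) \<union> (R1 \<union> R2)\<inverse>)\<^sup>*"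
  shows "(u,t) \<in> (R1 \<union> R1\<inverse>)\<^sup>* \<or> (\<exists>c \<in> Field R1 \<inter> Field R2. (u,c) \<in> (R1 \<union> R1\<inverse>)\<^sup>*)"
  using assms(2)
proof (induction rule: rtrancl_induct)
  case (step t t')
  consider "(u,t) \<in> (R1 \<union> R1\<inverse>)\<^sup>*" "(t,t') \<in> R1 \<union> R1\<inverse>"
    | "(u,t) \<in> (R1 \<union> R1\<inverse>)\<^sup>*" "(t,t') \<in> R2 \<union> R2\<inverse>"
    | "\<exists>c \<in> Field R1 \<inter> Field R2. (u,c) \<in> (R1 \<union> R1\<inverse>)\<^sup>*"
    using step.IH step.hyps(2) by blast
  then show ?case
  proof cases
    case 1
    then show ?thesis by (meson rtrancl_into_rtrancl)
  next
    case 2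
    have "t \<in> Field R1"
      using sym_reach_Field[OF 2(1) assms(1)] .
    moreover have "t \<in> Field R2"
      using 2(2) by (auto simp: Field_def)
    ultimately show ?thesis using 2(1) by blast
  next
    case 3
    then show ?thesis by blast
  qed
qed simp

lemma sym_connected_Un_left:
  assumes conn: "sym_connected (R1 \<union> R2)" and common: "Field R1 \<inter> Field R2 \<subseteq> {c}"
  shows "sym_connected R1"
  unfolding sym_connected_def
proof (intro ballI)
  fix u w assume u: "u \<in> Field R1" and w: "w \<in> Field R1"
  then have "(u,w) \<in> ((R1 \<union> R2) \<union> (R1 \<union> R2)\<inverse>)\<^sup>*" "(w,u) \<in> ((R1 \<union> R2) \<union> (R1 \<union> R2)\<inverse>)\<^sup>*"
    using conn by (auto simp: sym_connected_def Field_Un)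
  then have "(u,w) \<in> (R1 \<union> R1\<inverse>)\<^sup>* \<or> (u,c) \<in> (R1 \<union> R1\<inverse>)\<^sup>*"
    and "(w,u) \<in> (R1 \<union> R1\<inverse>)\<^sup>* \<or> (w,c) \<in> (R1 \<union> R1\<inverse>)\<^sup>*"
    using sym_reach_Un_cases[OF u] sym_reach_Un_cases[OF w] common by blast+
  then show "(u,w) \<in> (R1 \<union> R1\<inverse>)\<^sup>*"
    by (meson rtrancl_trans sym_reach_sym)
qed

lemma sym_connected_Un_disjoint:
  assumes "sym_connected (R1 \<union> R2)" and "Field R1 \<inter> Field R2 = {}"
  shows "R1 = {} \<or> R2 = {}"
proof (rule ccontr)
  assume "\<not> (R1 = {} \<or> R2 = {})"
  then obtain u w where u: "u \<in> Field R1" and w: "w \<in> Field R2"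
    by (auto simp: Field_def)
  then have "(u,w) \<in> ((R1 \<union> R2) \<union> (R1 \<union> R2)\<inverse>)\<^sup>*"
    using assms(1) by (auto simp: sym_connected_def Field_Un)
  then show False
    using sym_reach_Un_cases[OF u] sym_reach_Field[of u w R1] u w assms(2) by blast
qed

lemma sym_connected_remove_leaf:
  assumes conn: "sym_connected R"
    and leaf: "\<And>x y. (z,x) \<in> R \<union> R\<inverse> \<Longrightarrow> (z,y) \<in> R \<union> R\<inverse> \<Longrightarrow> x = y"
  shows "sym_connected {(a,b) \<in> R. a \<noteq> z \<and> b \<noteq> z}" (is "sym_connected ?R'")
  unfolding sym_connected_def
proof (intro ballI)
  fix u w assume "u \<in> Field ?R'" "w \<in> Field ?R'"
  then have u: "u \<in> Field R" "u \<noteq> z" and w: "w \<in> Field R" "w \<noteq> z"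
    by (auto simp: Field_def)
  \<comment> \<open>a path from u can leave z only towards the neighbour it came from\<close>
  have "(t \<noteq> z \<longrightarrow> (u,t) \<in> (?R' \<union> ?R'\<inverse>)\<^sup>*) \<and>
        (t = z \<longrightarrow> (\<exists>p. (z,p) \<in> R \<union> R\<inverse> \<and> (u,p) \<in> (?R' \<union> ?R'\<inverse>)\<^sup>*))"
    if "(u,t) \<in> (R \<union> R\<inverse>)\<^sup>*" for t
    using that
  proof (induction rule: rtrancl_induct)
    case (step t t')
    show ?case
    proof (cases "t = z")
      case True
      then show ?thesis using step leaf by blast
    next
      case False
      then show ?thesis using step by (auto intro: rtrancl_into_rtrancl)
    qed
  qed (use u in simp)
  then show "(u,w) \<in> (?R' \<union> ?R'\<inverse>)\<^sup>*"
    using conn u(1) w by (auto simp: sym_connected_def)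
qed

lemma single_valued_reach_sink:
  assumes sv: "single_valued R" and sink: "e \<notin> Domain R" and reach: "(e,t) \<in> (R \<union> R\<inverse>)\<^sup>*"
  shows "(t,e) \<in> R\<^sup>*"
  using reach
proof (induction rule: rtrancl_induct)
  case (step t t')
  show ?case
  proof (cases "(t',t) \<in> R")
    case False
    then have "(t,t') \<in> R" using step.hyps(2) by auto
    moreover have "t \<noteq> e" using calculation sink by auto
    ultimately show ?thesis
      using step.IH sv by (metis converse_rtranclE single_valuedD)
  qed (use step.IH in \<open>auto intro: converse_rtrancl_into_rtrancl\<close>)
qed simp

lemma rtrancl_not_reentering: "(r,t) \<in> R\<^sup>* \<Longrightarrow> (r,t) \<in> {(x,y) \<in> R. y \<noteq> r}\<^sup>*"
proof (induction rule: rtrancl_induct)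
  case (step y z)
  then show ?case by (cases "z = r") (auto intro: rtrancl_into_rtrancl)
qed simp

lemma rtrancl_avoiding_predecessor:
  assumes "(r,t) \<in> R\<^sup>*" and "t \<noteq> p" and succ: "\<And>y. (p,y) \<in> R \<Longrightarrow> y = r"
  shows "(r,t) \<in> {(x,y) \<in> R. x \<noteq> p \<and> y \<noteq> p}\<^sup>*"
  using rtrancl_not_reentering[OF assms(1)] assms(2)
proof (induction rule: rtrancl_induct)
  case (step y z)
  then have "y \<noteq> p" using succ by blast
  then show ?case using step by (auto intro: rtrancl_into_rtrancl)
qed simp

lemma sym_connected_if_reach_from:
  assumes "\<And>u. u \<in> Field R \<Longrightarrow> (r,u) \<in> R\<^sup>*"
  shows "sym_connected R"
  unfolding sym_connected_def
proof (intro ballI)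
  fix u w assume "u \<in> Field R" "w \<in> Field R"
  then have "(u,r) \<in> (R \<union> R\<inverse>)\<^sup>*" "(r,w) \<in> (R \<union> R\<inverse>)\<^sup>*"
    using sym_reach_sym[OF rtrancl_into_sym_reach[OF assms]] rtrancl_into_sym_reach[OF assms]
    by simp_all
  then show "(u,w) \<in> (R \<union> R\<inverse>)\<^sup>*" by (rule rtrancl_trans)
qed

lemma card_Domain_diff_Range:
  assumes "finite R" and "single_valued R" and "single_valued (R\<inverse>)"
  shows "card (Domain R - Range R) = card (Range R - Domain R)"
proof -
  have "inj_on fst R" "inj_on snd R"
    using assms(2,3) by (auto simp: inj_on_def single_valued_def)
  then have "card (Domain R) = card R" "card (Range R) = card R"
    by (simp_all add: Domain_fst Range_snd card_image)
  moreover have "finite (Domain R)" "finite (Range R)"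
    using assms(1) by (simp_all add: finite_Domain finite_Range)
  ultimately show ?thesis
    by (simp add: card_Diff_subset_Int Int_commute)
qed


section \<open>Face sets\<close>

definition wf_faces :: "('v \<times> 'v \<times> 'v) set \<Rightarrow> bool" where
  "wf_faces F \<longleftrightarrow> finite F \<and> rot_closed F \<and> (\<forall>a b c. (a,b,c) \<in> F \<longrightarrow> a \<noteq> b \<and> b \<noteq> c \<and> a \<noteq> c) \<and>
     (\<forall>a b c c'. (a,b,c) \<in> F \<longrightarrow> (a,b,c') \<in> F \<longrightarrow> c = c')"

definition nbrs :: "('v \<times> 'v \<times> 'v) set \<Rightarrow> 'v \<Rightarrow> 'v set" where
  "nbrs F v = {u. (v,u) \<in> darts F \<or> (u,v) \<in> darts F}"

definition no_twin_faces :: "('v \<times> 'v \<times> 'v) set \<Rightarrow> bool" where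
  "no_twin_faces F \<longleftrightarrow> (\<forall>a b c. (a,b,c) \<in> F \<longrightarrow> (a,c,b) \<notin> F)"

lemma darts_iff: "(a,b) \<in> darts F \<longleftrightarrow> (\<exists>c. (a,b,c) \<in> F)"
  by (simp add: darts_def)

lemma verts_iff: "a \<in> verts F \<longleftrightarrow> (\<exists>b c. (a,b,c) \<in> F)"
  by (simp add: verts_def)

lemma link_iff: "(u,w) \<in> link F v \<longleftrightarrow> (v,u,w) \<in> F"
  by (simp add: link_def)

lemma bdarts_iff: "(a,b) \<in> bdarts F \<longleftrightarrow> (a,b) \<in> darts F \<and> (b,a) \<notin> darts F"
  by (simp add: bdarts_def)

lemma bverts_iff: "a \<in> bverts F \<longleftrightarrow> (\<exists>b. (a,b) \<in> bdarts F)"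
  by (simp add: bverts_def)

lemma edges_iff: "e \<in> edges F \<longleftrightarrow> (\<exists>a b. e = {a,b} \<and> (a,b) \<in> darts F)"
  by (auto simp: edges_def)

lemma doubleton_in_edges: "{u,v} \<in> edges F \<longleftrightarrow> (u,v) \<in> darts F \<or> (v,u) \<in> darts F"
  by (auto simp: edges_iff doubleton_eq_iff)

lemma nbrs_iff: "u \<in> nbrs F v \<longleftrightarrow> (v,u) \<in> darts F \<or> (u,v) \<in> darts F"
  by (simp add: nbrs_def)

lemma nbrs_iff_edge: "u \<in> nbrs F v \<longleftrightarrow> {v,u} \<in> edges F"
  by (simp add: nbrs_iff doubleton_in_edges)

lemma edges_mono: "F \<subseteq> G \<Longrightarrow> edges F \<subseteq> edges G"
  by (auto simp: edges_def darts_def)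

lemma darts_Un: "darts (F1 \<union> F2) = darts F1 \<union> darts F2"
  by (auto simp: darts_def)

lemma edges_Un: "edges (F1 \<union> F2) = edges F1 \<union> edges F2"
  by (auto simp: edges_def darts_Un)

lemma verts_Un: "verts (F1 \<union> F2) = verts F1 \<union> verts F2"
  by (auto simp: verts_def)

lemma link_Un: "link (F1 \<union> F2) v = link F1 v \<union> link F2 v"
  by (auto simp: link_def)

lemma bverts_subset_verts: "bverts F \<subseteq> verts F"
  by (auto simp: bverts_def bdarts_def darts_def verts_def)

lemma wf_faces_subset: "wf_faces F \<Longrightarrow> G \<subseteq> F \<Longrightarrow> rot_closed G \<Longrightarrow> wf_faces G"
  unfolding wf_faces_def by (blast intro: finite_subset)

context
  fixes F :: "('v \<times> 'v \<times> 'v) set"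
  assumes wf: "wf_faces F"
begin

lemma face_rotate: "(a,b,c) \<in> F \<Longrightarrow> (b,c,a) \<in> F"
  using wf by (simp add: wf_faces_def rot_closed_def)

lemma face_rotate2: "(a,b,c) \<in> F \<Longrightarrow> (c,a,b) \<in> F"
  using face_rotate by blast

lemma face_distinct: "(a,b,c) \<in> F \<Longrightarrow> a \<noteq> b \<and> b \<noteq> c \<and> a \<noteq> c"
  using wf by (simp add: wf_faces_def)

lemma face_unique: "(a,b,c) \<in> F \<Longrightarrow> (a,b,c') \<in> F \<Longrightarrow> c = c'"
  using wf unfolding wf_faces_def by blast

lemma dart_verts: "(u,v) \<in> darts F \<Longrightarrow> u \<in> verts F \<and> v \<in> verts F"
  by (auto simp: darts_iff verts_iff dest: face_rotate)

lemma dart_ne: "(u,w) \<in> darts F \<Longrightarrow> u \<noteq> w"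
  by (auto simp: darts_iff dest: face_distinct)

lemma doubleton_in_edges_ne: "{u,w} \<in> edges F \<Longrightarrow> u \<noteq> w"
  by (auto simp: doubleton_in_edges dest: dart_ne)

lemma edge_subset_verts: "e \<in> edges F \<Longrightarrow> e \<subseteq> verts F"
  by (auto simp: edges_iff dest: dart_verts)

lemma finite_verts: "finite (verts F)"
proof -
  have "verts F = fst ` F" by (force simp: verts_iff)
  then show ?thesis using wf by (simp add: wf_faces_def)
qed

lemma nbrs_ne: "u \<in> nbrs F v \<Longrightarrow> u \<noteq> v"
  by (auto simp: nbrs_iff darts_iff dest: face_distinct)

lemma Domain_link: "Domain (link F v) = {u. (v,u) \<in> darts F}"
  by (auto simp: link_iff darts_iff)

lemma Range_link: "Range (link F v) = {u. (u,v) \<in> darts F}"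
  by (auto simp: Range_iff link_iff darts_iff; meson face_rotate face_rotate2)

lemma Field_link: "Field (link F v) = nbrs F v"
  by (auto simp: Field_def Domain_link Range_link nbrs_iff)

lemma single_valued_link: "single_valued (link F v)"
  by (auto simp: single_valued_def link_iff dest: face_unique)

lemma single_valued_converse_link: "single_valued ((link F v)\<inverse>)"
  by (auto simp: single_valued_def link_iff dest: face_unique face_rotate2)

lemma finite_link: "finite (link F v)"
proof -
  have "link F v \<subseteq> (\<lambda>(a,b,c). (b,c)) ` F" by (force simp: link_iff)
  then show ?thesis using wf finite_subset by (auto simp: wf_faces_def)
qed

text \<open>The link of v is a partial permutation whose sources are the boundary darts leaving v
  and whose sinks are those entering v, and a finite partial permutation has as many
  sources as sinks.\<close>
lemma bverts_iff_in: "v \<in> bverts F \<longleftrightarrow> (\<exists>u. (u,v) \<in> bdarts F)"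
proof -
  let ?R = "link F v"
  have out: "Domain ?R - Range ?R = {u. (v,u) \<in> bdarts F}"
    and into: "Range ?R - Domain ?R = {u. (u,v) \<in> bdarts F}"
    by (auto simp: Domain_link Range_link bdarts_iff)
  have "card {u. (v,u) \<in> bdarts F} = card {u. (u,v) \<in> bdarts F}"
    using card_Domain_diff_Range[OF finite_link single_valued_link single_valued_converse_link,
        of v]
    unfolding out into .
  moreover have "finite {u. (v,u) \<in> bdarts F}" "finite {u. (u,v) \<in> bdarts F}"
    unfolding out[symmetric] into[symmetric] using finite_link
    by (simp_all add: finite_Domain finite_Range)
  ultimately show ?thesis
    unfolding bverts_iff by (metis (no_types, lifting) card_0_eq empty_Collect_eq)
qed

lemma bdarts_target_bverts: "(u,v) \<in> bdarts F \<Longrightarrow> v \<in> bverts F"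
  using bverts_iff_in by blast

lemma interior_nbr_darts: "v \<notin> bverts F \<Longrightarrow> u \<in> nbrs F v \<Longrightarrow> (v,u) \<in> darts F \<and> (u,v) \<in> darts F"
  unfolding nbrs_iff using bverts_iff bverts_iff_in bdarts_iff by metis

lemma bdarts_into_unique:
  assumes conn: "sym_connected (link F v)" and "(u,v) \<in> bdarts F" and "(u',v) \<in> bdarts F"
  shows "u = u'"
proof -
  let ?R = "link F v"
  have sinks: "u \<notin> Domain ?R" "u' \<notin> Domain ?R"
    using assms(2,3) by (auto simp: Domain_link bdarts_iff)
  have "u \<in> Field ?R" "u' \<in> Field ?R"
    using assms(2,3) by (auto simp: Field_link nbrs_iff bdarts_iff)
  then have "(u,u') \<in> (?R \<union> ?R\<inverse>)\<^sup>*"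
    using conn by (simp add: sym_connected_def)
  then have "(u',u) \<in> ?R\<^sup>*"
    using single_valued_reach_sink[OF single_valued_link sinks(1)] by blast
  then show ?thesis
    using sinks(2) by (metis Domain.DomainI converse_rtranclE)
qed

lemma bdarts_from_unique:
  assumes conn: "sym_connected (link F v)" and "(v,u) \<in> bdarts F" and "(v,u') \<in> bdarts F"
  shows "u = u'"
proof -
  let ?R = "(link F v)\<inverse>"
  have sinks: "u \<notin> Domain ?R" "u' \<notin> Domain ?R"
    using assms(2,3) by (auto simp: Range_link bdarts_iff)
  have "u \<in> Field ?R" "u' \<in> Field ?R"
    using assms(2,3) by (auto simp: Field_link nbrs_iff bdarts_iff)
  then have "(u,u') \<in> (?R \<union> ?R\<inverse>)\<^sup>*"
    using conn by (simp add: sym_connected_def Un_commute)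
  then have "(u',u) \<in> ?R\<^sup>*"
    using single_valued_reach_sink[OF single_valued_converse_link sinks(1)] by blast
  then show ?thesis
    using sinks(2) by (metis Domain.DomainI converse_rtranclE)
qed

end

lemma bverts_Un_outside:
  assumes "wf_faces F2" and "v \<notin> verts F2"
  shows "v \<in> bverts (F1 \<union> F2) \<longleftrightarrow> v \<in> bverts F1"
proof -
  have "(v,u) \<notin> darts F2" "(u,v) \<notin> darts F2" for u
    using assms dart_verts by metis+
  then show ?thesis
    by (auto simp: bverts_iff bdarts_iff darts_Un)
qed

lemma triangular_graph_wf_faces: "triangular_graph T \<Longrightarrow> wf_faces T"
  unfolding triangular_graph_def wf_faces_def rot_closed_def by blast

lemma triangular_graph_link_reach:
  "triangular_graph T \<Longrightarrow> (v,u) \<in> darts T \<Longrightarrow> (v,w) \<in> darts T \<Longrightarrow> (u,w) \<in> (link T v)\<^sup>*"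
  unfolding triangular_graph_def by blast

lemma triangular_graph_darts_sym: "triangular_graph T \<Longrightarrow> (a,b) \<in> darts T \<Longrightarrow> (b,a) \<in> darts T"
  unfolding triangular_graph_def by blast

lemma triangular_graph_darts_connected:
  "triangular_graph T \<Longrightarrow> x \<in> verts T \<Longrightarrow> y \<in> verts T \<Longrightarrow> (x,y) \<in> (darts T)\<^sup>*"
  unfolding triangular_graph_def by blast

lemma triangular_graph_Field_link:
  assumes tg: "triangular_graph T"
  shows "u \<in> Field (link T v) \<longleftrightarrow> (v,u) \<in> darts T"
proof -
  have "(u,v) \<in> darts T \<Longrightarrow> (v,u) \<in> darts T"
    by (rule triangular_graph_darts_sym[OF tg])
  then show ?thesis
    using Field_link[OF triangular_graph_wf_faces[OF tg]] by (auto simp: nbrs_iff)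
qed

lemma triangular_graph_sym_connected_link:
  assumes tg: "triangular_graph T"
  shows "sym_connected (link T v)"
  unfolding sym_connected_def
proof (intro ballI)
  fix u w assume "u \<in> Field (link T v)" "w \<in> Field (link T v)"
  then have "(v,u) \<in> darts T" "(v,w) \<in> darts T"
    by (simp_all add: triangular_graph_Field_link[OF tg])
  then show "(u,w) \<in> (link T v \<union> (link T v)\<inverse>)\<^sup>*"
    by (intro rtrancl_into_sym_reach triangular_graph_link_reach[OF tg])
qed


section \<open>Near triangulations inside a triangular graph\<close>

text \<open>Connectedness of every link rules out pinched vertices: the faces of F around a vertex
  form a single fan.\<close>
definition near_triangulation_in :: "('v \<times> 'v \<times> 'v) set \<Rightarrow> ('v \<times> 'v \<times> 'v) set \<Rightarrow> bool" where
  "near_triangulation_in T F \<longleftrightarrow>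
     F \<subseteq> T \<and> wf_faces F \<and> no_twin_faces F \<and> (\<forall>v. sym_connected (link F v))"

lemma near_triangulation_inD:
  assumes "near_triangulation_in T F"
  shows "F \<subseteq> T" and "wf_faces F" and "no_twin_faces F" and "sym_connected (link F v)"
  using assms by (simp_all add: near_triangulation_in_def)

lemma common_link_nbr:
  assumes "wf_faces F1" and "wf_faces F2" and "edges F1 \<inter> edges F2 \<subseteq> {{x,y}}"
    and "c \<in> Field (link F1 v) \<inter> Field (link F2 v)"
  shows "{v,c} = {x,y}"
proof -
  have "{v,c} \<in> edges F1 \<inter> edges F2"
    using assms(4) by (simp add: Field_link[OF assms(1)] Field_link[OF assms(2)] nbrs_iff_edge)
  then show ?thesis using assms(3) by blast
qed

lemma near_triangulation_in_split:
  assumes nt: "near_triangulation_in T (F1 \<union> F2)" and rot: "rot_closed F1" "rot_closed F2"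
    and E: "edges F1 \<inter> edges F2 \<subseteq> {{x,y}}"
  shows "near_triangulation_in T F1"
proof -
  have wf: "wf_faces F1" "wf_faces F2"
    using wf_faces_subset[OF near_triangulation_inD(2)[OF nt]] rot by auto
  have "sym_connected (link F1 v)" for v
  proof (rule sym_connected_Un_left)
    show "sym_connected (link F1 v \<union> link F2 v)"
      using near_triangulation_inD(4)[OF nt] by (simp add: link_Un)
    show "Field (link F1 v) \<inter> Field (link F2 v) \<subseteq> {if v = x then y else x}"
    proof
      fix c assume c: "c \<in> Field (link F1 v) \<inter> Field (link F2 v)"
      then have "c \<noteq> v"
        using nbrs_ne[OF wf(1)] by (simp add: Field_link[OF wf(1)])
      with common_link_nbr[OF wf E c] show "c \<in> {if v = x then y else x}"
        by (auto simp: doubleton_eq_iff)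
    qed
  qed
  moreover have "F1 \<subseteq> T" "no_twin_faces F1"
    using near_triangulation_inD(1,3)[OF nt] unfolding no_twin_faces_def by blast+
  ultimately show ?thesis
    using wf(1) by (simp add: near_triangulation_in_def)
qed

lemma near_triangulation_in_shared_vertex:
  assumes nt: "near_triangulation_in T (F1 \<union> F2)" and rot: "rot_closed F1" "rot_closed F2"
    and E: "edges F1 \<inter> edges F2 \<subseteq> {{x,y}}" and v: "v \<in> verts F1" "v \<in> verts F2"
  shows "v \<in> {x,y}"
proof (rule ccontr)
  assume "v \<notin> {x,y}"
  have wf: "wf_faces F1" "wf_faces F2"
    using wf_faces_subset[OF near_triangulation_inD(2)[OF nt]] rot by auto
  have "Field (link F1 v) \<inter> Field (link F2 v) = {}"
    using common_link_nbr[OF wf E] \<open>v \<notin> {x,y}\<close> by (auto simp: doubleton_eq_iff)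
  moreover have "sym_connected (link F1 v \<union> link F2 v)"
    using near_triangulation_inD(4)[OF nt] by (simp add: link_Un)
  moreover have "link F1 v \<noteq> {}" "link F2 v \<noteq> {}"
    using v by (auto simp: verts_iff link_def)
  ultimately show False
    using sym_connected_Un_disjoint by blast
qed


section \<open>Orientations produced by the procedure\<close>

abbreviation indeg :: "('v \<times> 'v) set \<Rightarrow> 'v \<Rightarrow> nat" where
  "indeg A v \<equiv> card {u. (u,v) \<in> A}"

definition orients :: "('v \<times> 'v) set \<Rightarrow> 'v set set \<Rightarrow> bool" where
  "orients A E \<longleftrightarrow> (\<forall>p \<in> A. {fst p, snd p} \<in> E) \<and> (\<forall>e \<in> E. \<exists>!p. p \<in> A \<and> {fst p, snd p} = e)"

lemma orients_Un:
  assumes A: "orients A E" and B: "orients B E'" and disj: "E \<inter> E' = {}"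
  shows "orients (A \<union> B) (E \<union> E')"
  unfolding orients_def
proof (intro conjI ballI)
  fix p assume "p \<in> A \<union> B"
  then show "{fst p, snd p} \<in> E \<union> E'"
    using A B by (auto simp: orients_def)
next
  fix e assume e: "e \<in> E \<union> E'"
  have notB: "p \<notin> B" if "e \<in> E" "{fst p, snd p} = e" for p
    using that B disj by (auto simp: orients_def)
  have notA: "p \<notin> A" if "e \<in> E'" "{fst p, snd p} = e" for p
    using that A disj by (auto simp: orients_def)
  show "\<exists>!p. p \<in> A \<union> B \<and> {fst p, snd p} = e"
  proof (cases "e \<in> E")
    case True
    then have "\<exists>!p. p \<in> A \<and> {fst p, snd p} = e" using A by (simp add: orients_def)
    then show ?thesis using notB[OF True] by (metis Un_iff)
  next
    case False
    then have "e \<in> E'" using e by blast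
    then have "\<exists>!p. p \<in> B \<and> {fst p, snd p} = e" using B by (simp add: orients_def)
    then show ?thesis using notA[OF \<open>e \<in> E'\<close>] by (metis Un_iff)
  qed
qed

definition expected_indeg :: "('v \<times> 'v \<times> 'v) set \<Rightarrow> 'v \<Rightarrow> 'v \<Rightarrow> 'v \<Rightarrow> nat" where
  "expected_indeg F v1 v2 v = (if v \<in> bverts F then if v = v1 \<or> v = v2 then 0 else 2 else 3)"

text \<open>The invariant of a run on F with distinguished vertices v1, v2.  The edge v1v2 is oriented
  by the caller, not by the run.\<close>
definition near_3_orientation :: "('v \<times> 'v \<times> 'v) set \<Rightarrow> 'v \<Rightarrow> 'v \<Rightarrow> ('v \<times> 'v) set \<Rightarrow> bool" where
  "near_3_orientation F v1 v2 A \<longleftrightarrow>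
     orients A (edges F - {{v1,v2}}) \<and> (\<forall>v \<in> verts F. indeg A v = expected_indeg F v1 v2 v)"

context
  fixes F :: "('v \<times> 'v \<times> 'v) set" and v1 v2 :: 'v and A :: "('v \<times> 'v) set"
  assumes wf: "wf_faces F" and A: "near_3_orientation F v1 v2 A"
begin

lemma near_3_orientation_orients: "orients A (edges F - {{v1,v2}})"
  using A by (simp add: near_3_orientation_def)

lemma near_3_orientation_indeg: "v \<in> verts F \<Longrightarrow> indeg A v = expected_indeg F v1 v2 v"
  using A by (simp add: near_3_orientation_def)

lemma near_3_orientation_arc_edge: "(u,v) \<in> A \<Longrightarrow> {u,v} \<in> edges F"
  using near_3_orientation_orients by (force simp: orients_def)

lemma near_3_orientation_arc_verts: "(u,v) \<in> A \<Longrightarrow> u \<in> verts F \<and> v \<in> verts F"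
  using near_3_orientation_arc_edge edge_subset_verts[OF wf] by blast

lemma near_3_orientation_no_in_outside: "v \<notin> verts F \<Longrightarrow> {u. (u,v) \<in> A} = {}"
  using near_3_orientation_arc_verts by blast

lemma near_3_orientation_finite_in: "finite {u. (u,v) \<in> A}"
proof (rule finite_subset[OF _ finite_verts[OF wf]])
  show "{u. (u,v) \<in> A} \<subseteq> verts F"
    using near_3_orientation_arc_verts by blast
qed

lemma near_3_orientation_no_in_root:
  assumes "v \<in> bverts F" and "v = v1 \<or> v = v2"
  shows "{u. (u,v) \<in> A} = {}"
proof (cases "v \<in> verts F")
  case True
  then have "indeg A v = 0"
    using near_3_orientation_indeg assms by (simp add: expected_indeg_def)
  then show ?thesis using near_3_orientation_finite_in by simp
qed (rule near_3_orientation_no_in_outside)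

end

lemma indeg_Un_disjoint:
  assumes "finite {u. (u,v) \<in> A}" and "finite {u. (u,v) \<in> B}"
    and "{u. (u,v) \<in> A} \<inter> {u. (u,v) \<in> B} = {}"
  shows "indeg (A \<union> B) v = indeg A v + indeg B v"
proof -
  have "{u. (u,v) \<in> A \<union> B} = {u. (u,v) \<in> A} \<union> {u. (u,v) \<in> B}" by blast
  then show ?thesis using assms by (simp add: card_Un_disjoint)
qed


section \<open>Splitting along a chord\<close>

locale chord_split =
  fixes T F1 F2 :: "('v \<times> 'v \<times> 'v) set" and x y v1 v2 :: 'v
  assumes nt: "near_triangulation_in T (F1 \<union> F2)" and chord: "is_chord (F1 \<union> F2) x y"
    and disj: "F1 \<inter> F2 = {}" and rot: "rot_closed F1" "rot_closed F2"
    and common_edges: "edges F1 \<inter> edges F2 = {{x,y}}"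
    and root: "(v1,v2) \<in> bdarts (F1 \<union> F2)" "(v1,v2) \<in> bdarts F1" and xy: "(x,y) \<in> bdarts F2"
begin

lemma wf: "wf_faces (F1 \<union> F2)" "wf_faces F1" "wf_faces F2"
  using near_triangulation_inD(2)[OF nt] wf_faces_subset[OF near_triangulation_inD(2)[OF nt]] rot
  by auto

lemma near_triangulation_in_halves: "near_triangulation_in T F1" "near_triangulation_in T F2"
proof -
  have "edges F1 \<inter> edges F2 \<subseteq> {{x,y}}" "edges F2 \<inter> edges F1 \<subseteq> {{x,y}}"
    using common_edges by auto
  moreover have "near_triangulation_in T (F2 \<union> F1)"
    using nt by (simp add: Un_commute)
  ultimately show "near_triangulation_in T F1" "near_triangulation_in T F2"
    using near_triangulation_in_split[OF nt rot] near_triangulation_in_split[of T F2 F1 x y] rot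
    by auto
qed

lemma chord_darts: "(x,y) \<in> darts (F1 \<union> F2)" "(y,x) \<in> darts (F1 \<union> F2)"
  using chord by (auto simp: is_chord_def doubleton_in_edges bdarts_iff)

lemma chord_bdart_left: "(y,x) \<in> bdarts F1"
proof -
  have "(x,y) \<notin> darts F1"
  proof
    assume "(x,y) \<in> darts F1"
    then obtain c1 where "(x,y,c1) \<in> F1" by (auto simp: darts_iff)
    moreover obtain c2 where "(x,y,c2) \<in> F2" using xy by (auto simp: bdarts_iff darts_iff)
    ultimately show False using face_unique[OF wf(1)] disj by blast
  qed
  then show ?thesis
    using chord_darts xy by (auto simp: bdarts_iff darts_Un)
qed

lemma edges_chord_split:
  "edges (F1 \<union> F2) - {{v1,v2}} = (edges F1 - {{v1,v2}}) \<union> (edges F2 - {{x,y}}) \<and>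
   (edges F1 - {{v1,v2}}) \<inter> (edges F2 - {{x,y}}) = {}"
proof -
  have split: "(X1 \<union> X2) - {a} = (X1 - {a}) \<union> (X2 - {b}) \<and> (X1 - {a}) \<inter> (X2 - {b}) = {}"
    if "a \<in> X1" "b \<in> X1" "a \<noteq> b" "X1 \<inter> X2 = {b}" for X1 X2 :: "'v set set" and a b
    using that by blast
  have "{v1,v2} \<noteq> {x,y}"
    using root(1) chord by (auto simp: is_chord_def doubleton_eq_iff)
  moreover have "{v1,v2} \<in> edges F1" "{x,y} \<in> edges F1"
    using root(2) chord_bdart_left by (auto simp: doubleton_in_edges bdarts_iff)
  ultimately show ?thesis
    unfolding edges_Un by (intro split common_edges)
qed

lemma indeg_chord_Un:
  assumes A1: "near_3_orientation F1 v1 v2 A1" and A2: "near_3_orientation F2 x y A2"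
    and v: "v \<in> verts (F1 \<union> F2)"
  shows "indeg (A1 \<union> A2) v = expected_indeg (F1 \<union> F2) v1 v2 v"
proof (cases "v \<in> {x,y}")
  case True
  have "x \<in> bverts F2" "y \<in> bverts F2"
    using xy bdarts_target_bverts[OF wf(3)] by (auto simp: bverts_iff)
  then have "{u. (u,v) \<in> A2} = {}"
    using near_3_orientation_no_in_root[OF wf(3) A2] True by blast
  then have "indeg (A1 \<union> A2) v = indeg A1 v" by simp
  moreover have "v \<in> verts F1" "v \<in> bverts F1"
    using chord_bdart_left True dart_verts[OF wf(2)] bdarts_target_bverts[OF wf(2)]
    by (auto simp: bdarts_iff bverts_iff)
  moreover have "v \<in> bverts (F1 \<union> F2)"
    using chord True by (auto simp: is_chord_def)
  ultimately show ?thesis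
    using near_3_orientation_indeg[OF wf(2) A1] by (auto simp: expected_indeg_def)
next
  case False
  then consider "v \<in> verts F1" "v \<notin> verts F2" | "v \<in> verts F2" "v \<notin> verts F1"
    using v near_triangulation_in_shared_vertex[OF nt rot] common_edges by (auto simp: verts_Un)
  then show ?thesis
  proof cases
    case 1
    then have "{u. (u,v) \<in> A2} = {}"
      using near_3_orientation_no_in_outside[OF wf(3) A2] by blast
    then have "indeg (A1 \<union> A2) v = indeg A1 v" by simp
    then show ?thesis
      using near_3_orientation_indeg[OF wf(2) A1 1(1)] bverts_Un_outside[OF wf(3) 1(2)]
      by (simp add: expected_indeg_def)
  next
    case 2
    then have "{u. (u,v) \<in> A1} = {}"
      using near_3_orientation_no_in_outside[OF wf(2) A1] by blast
    then have "indeg (A1 \<union> A2) v = indeg A2 v" by simp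
    moreover have "v \<in> bverts (F1 \<union> F2) \<longleftrightarrow> v \<in> bverts F2"
      using bverts_Un_outside[OF wf(2) 2(2), of F2] by (simp add: Un_commute)
    moreover have "v \<noteq> v1" "v \<noteq> v2"
      using root(2) dart_verts[OF wf(2)] 2(2) by (auto simp: bdarts_iff)
    ultimately show ?thesis
      using near_3_orientation_indeg[OF wf(3) A2 2(1)] False by (auto simp: expected_indeg_def)
  qed
qed

lemma near_3_orientation_chord:
  assumes A1: "near_3_orientation F1 v1 v2 A1" and A2: "near_3_orientation F2 x y A2"
  shows "near_3_orientation (F1 \<union> F2) v1 v2 (A1 \<union> A2)"
proof -
  have "orients (A1 \<union> A2) (edges (F1 \<union> F2) - {{v1,v2}})"
    using orients_Un[OF near_3_orientation_orients[OF wf(2) A1] near_3_orientation_orients[OF wf(3) A2]]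
      edges_chord_split by simp
  with indeg_chord_Un[OF A1 A2] show ?thesis
    unfolding near_3_orientation_def by blast
qed

end


section \<open>The orienting step\<close>

definition remove_vertex :: "('v \<times> 'v \<times> 'v) set \<Rightarrow> 'v \<Rightarrow> ('v \<times> 'v \<times> 'v) set" where
  "remove_vertex F z = {t \<in> F. z \<notin> {fst t, fst (snd t), snd (snd t)}}"

lemma remove_vertex_iff: "(a,b,c) \<in> remove_vertex F z \<longleftrightarrow> (a,b,c) \<in> F \<and> a \<noteq> z \<and> b \<noteq> z \<and> c \<noteq> z"
  by (auto simp: remove_vertex_def)

lemma remove_vertex_subset: "remove_vertex F z \<subseteq> F"
  by (auto simp: remove_vertex_def)

lemma wf_faces_remove_vertex: "wf_faces F \<Longrightarrow> wf_faces (remove_vertex F z)"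
  by (rule wf_faces_subset[OF _ remove_vertex_subset])
    (auto simp: rot_closed_def remove_vertex_iff dest: face_rotate)

lemma darts_remove_vertex: "(a,b) \<in> darts (remove_vertex F z) \<Longrightarrow> (a,b) \<in> darts F \<and> a \<noteq> z \<and> b \<noteq> z"
  by (auto simp: darts_iff remove_vertex_iff)

lemma removed_vertex_notin_verts: "z \<notin> verts (remove_vertex F z)"
  by (auto simp: verts_iff remove_vertex_iff)

lemma edges_remove_vertex: "e \<in> edges (remove_vertex F z) \<Longrightarrow> e \<in> edges F \<and> z \<notin> e"
  by (auto simp: edges_iff dest: darts_remove_vertex)

lemma link_remove_vertex:
  "v \<noteq> z \<Longrightarrow> link (remove_vertex F z) v = {(a,b) \<in> link F v. a \<noteq> z \<and> b \<noteq> z}"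
  by (auto simp: link_iff remove_vertex_iff)

lemma darts_remove_non_nbr:
  assumes wf: "wf_faces F" and "v \<noteq> z" and "z \<notin> nbrs F v"
  shows "(v,u) \<in> darts (remove_vertex F z) \<longleftrightarrow> (v,u) \<in> darts F"
    and "(u,v) \<in> darts (remove_vertex F z) \<longleftrightarrow> (u,v) \<in> darts F"
proof -
  have keep: "(a,b,c) \<in> remove_vertex F z" if "(a,b,c) \<in> F" "v \<in> {a,b,c}" for a b c
  proof -
    have "(a,b) \<in> darts F" "(b,c) \<in> darts F" "(c,a) \<in> darts F"
      using that(1) face_rotate[OF wf that(1)] face_rotate2[OF wf that(1)] by (auto simp: darts_iff)
    then have "{a,b,c} - {v} \<subseteq> nbrs F v"
      using that(2) by (auto simp: nbrs_iff)
    then show ?thesis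
      using that assms(2,3) by (auto simp: remove_vertex_iff)
  qed
  have "darts (remove_vertex F z) \<subseteq> darts F"
    by (auto simp: darts_def remove_vertex_def)
  moreover have "(v,u) \<in> darts (remove_vertex F z)" if "(v,u) \<in> darts F"
    using that keep by (auto simp: darts_iff)
  moreover have "(u,v) \<in> darts (remove_vertex F z)" if "(u,v) \<in> darts F"
    using that keep by (auto simp: darts_iff)
  ultimately show "(v,u) \<in> darts (remove_vertex F z) \<longleftrightarrow> (v,u) \<in> darts F"
    and "(u,v) \<in> darts (remove_vertex F z) \<longleftrightarrow> (u,v) \<in> darts F"
    by blast+
qed

lemma link_interior_vertex:
  assumes tg: "triangular_graph T" and "F \<subseteq> T" and wf: "wf_faces F"
    and v: "v \<in> verts F" "v \<notin> bverts F"
  shows "link F v = link T v"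
proof
  show "link F v \<subseteq> link T v"
    using \<open>F \<subseteq> T\<close> by (auto simp: link_iff)
next
  have wfT: "wf_faces T" using tg by (rule triangular_graph_wf_faces)
  obtain b c where "(v,b,c) \<in> F" using v(1) by (auto simp: verts_iff)
  then have b: "(v,b) \<in> darts F" by (auto simp: darts_iff)
  have in_F: "(v,t) \<in> darts F" if "(b,t) \<in> (link T v)\<^sup>*" for t
    using that
  proof (induction rule: rtrancl_induct)
    case (step t t')
    then obtain c where "(v,t,c) \<in> F" by (auto simp: darts_iff)
    moreover have "(v,t,t') \<in> T" using step.hyps(2) by (simp add: link_iff)
    ultimately have "(v,t,t') \<in> F"
      using face_unique[OF wfT] \<open>F \<subseteq> T\<close> by blast
    then have "t' \<in> nbrs F v"
      using face_rotate2[OF wf \<open>(v,t,t') \<in> F\<close>] by (auto simp: nbrs_iff darts_iff)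
    then show ?case using interior_nbr_darts[OF wf v(2)] by blast
  qed (rule b)
  show "link T v \<subseteq> link F v"
  proof
    fix p assume "p \<in> link T v"
    then obtain u w where p: "p = (u,w)" "(v,u,w) \<in> T" by (cases p) (auto simp: link_iff)
    have "(v,b) \<in> darts T" "(v,u) \<in> darts T"
      using b p(2) \<open>F \<subseteq> T\<close> by (auto simp: darts_iff)
    then have "(v,u) \<in> darts F"
      using in_F triangular_graph_link_reach[OF tg] by blast
    then obtain c where "(v,u,c) \<in> F" by (auto simp: darts_iff)
    moreover have "c = w"
      using calculation p(2) face_unique[OF wfT] \<open>F \<subseteq> T\<close> by blast
    ultimately show "p \<in> link F v"
      using p(1) by (simp add: link_iff)
  qed
qed

lemma sym_connected_link_remove_interior_nbr:
  assumes tg: "triangular_graph T" and "F \<subseteq> T" and wf: "wf_faces F"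
    and v: "v \<notin> bverts F" and z: "z \<in> nbrs F v"
  shows "sym_connected {(a,b) \<in> link F v. a \<noteq> z \<and> b \<noteq> z}" (is "sym_connected ?R'")
proof -
  have "v \<in> verts F"
    using z dart_verts[OF wf] by (auto simp: nbrs_iff)
  then have L: "link F v = link T v"
    using link_interior_vertex[OF tg \<open>F \<subseteq> T\<close> wf _ v] by blast
  obtain r where vzr: "(v,z,r) \<in> F"
    using interior_nbr_darts[OF wf v z] by (auto simp: darts_iff)
  have succ: "y = r" if "(z,y) \<in> link T v" for y
    using that vzr face_unique[OF triangular_graph_wf_faces[OF tg]] \<open>F \<subseteq> T\<close> by (auto simp: link_iff)
  have "r \<in> nbrs F v"
    using face_rotate2[OF wf vzr] by (auto simp: darts_iff nbrs_iff)
  then have "(v,r) \<in> darts T"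
    using interior_nbr_darts[OF wf v] \<open>F \<subseteq> T\<close> by (auto simp: darts_iff)
  show ?thesis
  proof (rule sym_connected_if_reach_from)
    fix u assume "u \<in> Field ?R'"
    then have "u \<in> nbrs F v" "u \<noteq> z"
      using Field_link[OF wf] by (auto simp: Field_def)
    then have "(v,u) \<in> darts T"
      using interior_nbr_darts[OF wf v] \<open>F \<subseteq> T\<close> by (auto simp: darts_iff)
    then have "(r,u) \<in> (link T v)\<^sup>*"
      using triangular_graph_link_reach[OF tg \<open>(v,r) \<in> darts T\<close>] by blast
    then show "(r,u) \<in> ?R'\<^sup>*"
      using rtrancl_avoiding_predecessor[OF _ \<open>u \<noteq> z\<close> succ] L by simp
  qed
qed

lemma sym_connected_link_remove_one_sided:
  assumes wf: "wf_faces F" and conn: "sym_connected (link F v)"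
    and one_sided: "\<not> ((v,z) \<in> darts F \<and> (z,v) \<in> darts F)"
  shows "sym_connected {(a,b) \<in> link F v. a \<noteq> z \<and> b \<noteq> z}"
proof (rule sym_connected_remove_leaf[OF conn])
  fix x y assume "(z,x) \<in> link F v \<union> (link F v)\<inverse>" "(z,y) \<in> link F v \<union> (link F v)\<inverse>"
  moreover have "(v,z) \<in> darts F" if "(z,x) \<in> link F v" for x
    using that by (auto simp: link_iff darts_iff)
  moreover have "(z,v) \<in> darts F" if "(x,z) \<in> link F v" for x
    using that face_rotate2[OF wf] by (auto simp: link_iff darts_iff)
  ultimately show "x = y"
    using one_sided single_valued_link[OF wf] single_valued_converse_link[OF wf]
    by (auto simp: single_valued_def)
qed

locale orienting_step =
  fixes T F :: "('v \<times> 'v \<times> 'v) set" and v1 v2 z :: 'v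
  assumes tg: "triangular_graph T" and nt: "near_triangulation_in T F"
    and root: "(v1,v2) \<in> bdarts F" and no_chord: "\<not> (\<exists>x y. is_chord F x y)"
    and v2_z: "(v2,z) \<in> bdarts F"
begin

lemma wf: "wf_faces F"
  using near_triangulation_inD(2)[OF nt] .

lemma conn: "sym_connected (link F v)"
  using near_triangulation_inD(4)[OF nt] .

lemma boundary_dart_one_sided:
  assumes "u \<in> bverts F" and "u' \<in> bverts F" and "(u,u') \<in> darts F"
  shows "(u',u) \<notin> darts F"
proof
  assume "(u',u) \<in> darts F"
  then have "is_chord F u u'"
    using assms by (auto simp: is_chord_def doubleton_in_edges bdarts_iff)
  then show False using no_chord by blast
qed

lemma z_bverts: "z \<in> bverts F"
  using bdarts_target_bverts[OF wf v2_z] .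

lemma v1_bverts: "v1 \<in> bverts F"
  using root by (auto simp: bverts_iff)

lemma v2_bverts: "v2 \<in> bverts F"
  using bdarts_target_bverts[OF wf root] .

lemma distinct_v1_v2_z: "z \<noteq> v1" "z \<noteq> v2" "v1 \<noteq> v2"
  using root v2_z face_distinct[OF wf] by (auto simp: bdarts_iff darts_iff)

lemma bdart_into_z: "(u,z) \<in> bdarts F \<Longrightarrow> u = v2"
  using bdarts_into_unique[OF wf conn _ v2_z] by blast

lemma bdart_into_v2: "(u,v2) \<in> bdarts F \<Longrightarrow> u = v1"
  using bdarts_into_unique[OF wf conn _ root] by blast

lemma boundary_dart_into_z: "u \<in> bverts F \<Longrightarrow> (u,z) \<in> darts F \<Longrightarrow> u = v2"
  using boundary_dart_one_sided[OF _ z_bverts] bdart_into_z by (auto simp: bdarts_iff)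

lemma orients_orient_at: "orients (orient_at F z) {e \<in> edges F. z \<in> e}"
  unfolding orients_def
proof (intro conjI ballI)
  fix p assume "p \<in> orient_at F z"
  then show "{fst p, snd p} \<in> {e \<in> edges F. z \<in> e}"
    by (auto simp: orient_at_def insert_commute)
next
  fix e assume "e \<in> {e \<in> edges F. z \<in> e}"
  then obtain u where e: "e = {u,z}" "{u,z} \<in> edges F"
    by (auto simp: edges_iff doubleton_eq_iff)
  then have "u \<noteq> z" using doubleton_in_edges_ne[OF wf] by blast
  let ?p = "if (u,z) \<in> bdarts F \<or> (z,u) \<in> bdarts F then (u,z) else (z,u)"
  have "p \<in> orient_at F z \<and> {fst p, snd p} = e \<longleftrightarrow> p = ?p" for p
    using e \<open>u \<noteq> z\<close> by (cases p) (auto simp: orient_at_def doubleton_eq_iff)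
  then show "\<exists>!p. p \<in> orient_at F z \<and> {fst p, snd p} = e" by simp
qed

lemma indeg_orient_at_z: "indeg (orient_at F z) z = 2"
proof -
  obtain w where zw: "(z,w) \<in> bdarts F"
    using z_bverts by (auto simp: bverts_iff)
  then have "v2 \<noteq> w"
    using v2_z by (auto simp: bdarts_iff)
  have "{u. (u,z) \<in> orient_at F z} = {u. (u,z) \<in> bdarts F \<or> (z,u) \<in> bdarts F}"
    using dart_ne[OF wf] by (auto simp: orient_at_def doubleton_in_edges bdarts_iff)
  also have "\<dots> = {v2, w}"
    using bdart_into_z bdarts_from_unique[OF wf conn zw] zw v2_z by blast
  finally show ?thesis
    using \<open>v2 \<noteq> w\<close> by simp
qed

lemma in_orient_at:
  assumes "v \<noteq> z"
  shows "{u. (u,v) \<in> orient_at F z} = (if z \<in> nbrs F v \<and> v \<notin> bverts F then {z} else {})"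
proof -
  have "{u. (u,v) \<in> orient_at F z} =
      (if {v,z} \<in> edges F \<and> (v,z) \<notin> bdarts F \<and> (z,v) \<notin> bdarts F then {z} else {})"
    using assms by (auto simp: orient_at_def insert_commute)
  moreover have "{v,z} \<in> edges F \<and> (v,z) \<notin> bdarts F \<and> (z,v) \<notin> bdarts F \<longleftrightarrow>
      z \<in> nbrs F v \<and> v \<notin> bverts F"
  proof
    assume edge: "{v,z} \<in> edges F \<and> (v,z) \<notin> bdarts F \<and> (z,v) \<notin> bdarts F"
    then have "v \<notin> bverts F"
      using boundary_dart_one_sided[OF _ z_bverts] boundary_dart_one_sided[OF z_bverts]
      by (auto simp: doubleton_in_edges bdarts_iff)
    then show "z \<in> nbrs F v \<and> v \<notin> bverts F"
      using edge by (simp add: nbrs_iff_edge)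
  next
    assume "z \<in> nbrs F v \<and> v \<notin> bverts F"
    then show "{v,z} \<in> edges F \<and> (v,z) \<notin> bdarts F \<and> (z,v) \<notin> bdarts F"
      using interior_nbr_darts[OF wf] by (auto simp: nbrs_iff_edge bdarts_iff)
  qed
  ultimately show ?thesis by simp
qed

lemma near_triangulation_in_remove_vertex: "near_triangulation_in T (remove_vertex F z)"
proof -
  have "sym_connected (link (remove_vertex F z) v)" for v
  proof (cases "v = z")
    case True
    then have "link (remove_vertex F z) v = {}"
      by (auto simp: link_iff remove_vertex_iff)
    then show ?thesis by (simp add: sym_connected_def)
  next
    case False
    show ?thesis
    proof (cases "(v,z) \<in> darts F \<and> (z,v) \<in> darts F")
      case True
      then have "v \<notin> bverts F" "z \<in> nbrs F v"
        using boundary_dart_one_sided z_bverts by (auto simp: nbrs_iff)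
      then show ?thesis
        using sym_connected_link_remove_interior_nbr[OF tg near_triangulation_inD(1)[OF nt] wf]
        by (simp add: link_remove_vertex[OF False])
    next
      case one_sided: False
      show ?thesis
        using sym_connected_link_remove_one_sided[OF wf conn one_sided]
        by (simp add: link_remove_vertex[OF False])
    qed
  qed
  moreover have "remove_vertex F z \<subseteq> T" "no_twin_faces (remove_vertex F z)"
    using near_triangulation_inD(1,3)[OF nt] remove_vertex_subset[of F z]
    unfolding no_twin_faces_def by blast+
  ultimately show ?thesis
    using wf_faces_remove_vertex[OF wf] by (simp add: near_triangulation_in_def)
qed

lemma edge_kept:
  assumes e: "e \<in> edges F" "z \<notin> e" "e \<noteq> {v1,v2}"
  shows "e \<in> edges (remove_vertex F z)"
proof -
  obtain s t c where st: "e = {s,t}" "(s,t,c) \<in> F"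
    using e(1) by (auto simp: edges_iff darts_iff)
  have "s \<noteq> z" "t \<noteq> z" using st(1) e(2) by auto
  consider "c \<noteq> z" | "c = z" "(t,s) \<in> darts F" | "c = z" "(t,s) \<notin> darts F"
    by blast
  then show ?thesis
  proof cases
    case 1
    then have "(s,t) \<in> darts (remove_vertex F z)"
      using st(2) \<open>s \<noteq> z\<close> \<open>t \<noteq> z\<close> by (auto simp: darts_iff remove_vertex_iff)
    then show ?thesis using st(1) by (auto simp: edges_iff)
  next
    case 2
    then obtain c' where tsc': "(t,s,c') \<in> F" by (auto simp: darts_iff)
    have "c' \<noteq> z"
    proof
      assume "c' = z"
      then have "(z,t,s) \<in> F" "(z,s,t) \<in> F"
        using face_rotate2[OF wf tsc'] face_rotate2[OF wf st(2)] 2(1) by simp_all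
      then show False
        using near_triangulation_inD(3)[OF nt] by (auto simp: no_twin_faces_def)
    qed
    then have "(t,s) \<in> darts (remove_vertex F z)"
      using tsc' \<open>s \<noteq> z\<close> \<open>t \<noteq> z\<close> by (auto simp: darts_iff remove_vertex_iff)
    then show ?thesis using st(1) by (auto simp: doubleton_in_edges insert_commute)
  next
    case 3
    then have st_bd: "(s,t) \<in> bdarts F"
      using st(2) by (auto simp: bdarts_iff darts_iff)
    have "(t,z) \<in> darts F"
      using face_rotate[OF wf st(2)] 3(1) by (auto simp: darts_iff)
    then have "t = v2"
      using boundary_dart_into_z bdarts_target_bverts[OF wf st_bd] by blast
    then have "s = v1"
      using bdart_into_v2 st_bd by blast
    then show ?thesis using e(3) st(1) \<open>t = v2\<close> by simp
  qed
qed

lemma edges_remove_vertex_split: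
  "edges F - {{v1,v2}} = {e \<in> edges F. z \<in> e} \<union> (edges (remove_vertex F z) - {{v1,v2}})"
proof (intro set_eqI iffI)
  fix e assume "e \<in> edges F - {{v1,v2}}"
  then show "e \<in> {e \<in> edges F. z \<in> e} \<union> (edges (remove_vertex F z) - {{v1,v2}})"
    using edge_kept by blast
next
  fix e assume "e \<in> {e \<in> edges F. z \<in> e} \<union> (edges (remove_vertex F z) - {{v1,v2}})"
  moreover have "{v1,v2} \<notin> {e \<in> edges F. z \<in> e}"
    using distinct_v1_v2_z by auto
  ultimately show "e \<in> edges F - {{v1,v2}}"
    using edges_remove_vertex[of e F z] by blast
qed

lemma remove_vertex_non_nbr:
  assumes "v \<in> verts F" and "v \<noteq> z" and "z \<notin> nbrs F v"
  shows "v \<in> verts (remove_vertex F z) \<and> (v \<in> bverts (remove_vertex F z) \<longleftrightarrow> v \<in> bverts F)"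
proof -
  note same = darts_remove_non_nbr[OF wf assms(2,3)]
  obtain b c where "(v,b,c) \<in> F" using assms(1) by (auto simp: verts_iff)
  then have "(v,b) \<in> darts (remove_vertex F z)"
    using same(1) by (auto simp: darts_iff)
  then have "v \<in> verts (remove_vertex F z)"
    by (auto simp: darts_iff verts_iff)
  moreover have "v \<in> bverts (remove_vertex F z) \<longleftrightarrow> v \<in> bverts F"
    using same by (simp add: bverts_iff bdarts_iff)
  ultimately show ?thesis by blast
qed

lemma boundary_nbr_stays_boundary:
  assumes "v \<noteq> z" and "z \<in> nbrs F v" and "v \<in> bverts F" and "v \<notin> {v1,v2}"
  shows "v \<in> bverts (remove_vertex F z)"
proof -
  have "(v,z) \<notin> darts F"
    using boundary_dart_into_z assms(3,4) by blast
  then obtain r where zvr: "(z,v,r) \<in> F"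
    using assms(2) by (auto simp: nbrs_iff darts_iff)
  have vrz: "(v,r,z) \<in> F" using face_rotate[OF wf zvr] .
  have "r \<noteq> z" using face_distinct[OF wf zvr] by blast
  show ?thesis
  proof (cases "(r,v) \<in> darts F")
    case True
    then obtain s where rvs: "(r,v,s) \<in> F" by (auto simp: darts_iff)
    have "s \<noteq> z"
      using face_rotate[OF wf rvs] \<open>(v,z) \<notin> darts F\<close> by (auto simp: darts_iff)
    then have "(r,v) \<in> darts (remove_vertex F z)"
      using rvs \<open>r \<noteq> z\<close> assms(1) by (auto simp: darts_iff remove_vertex_iff)
    moreover have "(v,r) \<notin> darts (remove_vertex F z)"
      using face_unique[OF wf vrz] by (auto simp: darts_iff remove_vertex_iff)
    ultimately show ?thesis
      using bdarts_target_bverts[OF wf_faces_remove_vertex[OF wf]] by (auto simp: bdarts_iff)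
  next
    case False
    then have vr: "(v,r) \<in> bdarts F"
      using vrz by (auto simp: bdarts_iff darts_iff)
    have "(r,z) \<in> darts F"
      using face_rotate[OF wf vrz] by (auto simp: darts_iff)
    then have "r = v2"
      using boundary_dart_into_z bdarts_target_bverts[OF wf vr] by blast
    then have "v = v1"
      using bdart_into_v2 vr by blast
    then show ?thesis using assms(4) by simp
  qed
qed

lemma interior_nbr_becomes_boundary:
  assumes "v \<noteq> z" and "z \<in> nbrs F v" and "v \<notin> bverts F"
  shows "v \<in> bverts (remove_vertex F z)"
proof -
  obtain r where vzr: "(v,z,r) \<in> F"
    using interior_nbr_darts[OF wf assms(3,2)] by (auto simp: darts_iff)
  obtain q where zvq: "(z,v,q) \<in> F"
    using interior_nbr_darts[OF wf assms(3,2)] by (auto simp: darts_iff)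
  have "q \<noteq> r"
    using face_rotate[OF wf zvq] vzr near_triangulation_inD(3)[OF nt] by (auto simp: no_twin_faces_def)
  have rvz: "(r,v,z) \<in> F" using face_rotate2[OF wf vzr] .
  then have "r \<in> nbrs F v" by (auto simp: nbrs_iff darts_iff)
  then obtain s where vrs: "(v,r,s) \<in> F"
    using interior_nbr_darts[OF wf assms(3)] by (auto simp: darts_iff)
  have "s \<noteq> z"
  proof
    assume "s = z"
    then have "(z,v,r) \<in> F" using face_rotate2[OF wf vrs] by simp
    then show False using face_unique[OF wf _ zvq] \<open>q \<noteq> r\<close> by blast
  qed
  moreover have "r \<noteq> z" using face_distinct[OF wf vzr] by blast
  ultimately have "(v,r) \<in> darts (remove_vertex F z)"
    using vrs assms(1) by (auto simp: darts_iff remove_vertex_iff)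
  moreover have "(r,v) \<notin> darts (remove_vertex F z)"
    using face_unique[OF wf rvz] by (auto simp: darts_iff remove_vertex_iff)
  ultimately show ?thesis by (auto simp: bverts_iff bdarts_iff)
qed

lemma remove_vertex_indeg_balance:
  assumes v: "v \<in> verts F" "v \<notin> {v1,v2,z}"
  shows "v \<in> verts (remove_vertex F z) \<and>
    expected_indeg F v1 v2 v = indeg (orient_at F z) v + expected_indeg (remove_vertex F z) v1 v2 v"
proof -
  have "v \<noteq> z" using v(2) by simp
  note in_z = in_orient_at[OF \<open>v \<noteq> z\<close>]
  consider "z \<notin> nbrs F v" | "z \<in> nbrs F v" "v \<in> bverts F" | "z \<in> nbrs F v" "v \<notin> bverts F"
    by blast
  then show ?thesis
  proof cases
    case 1
    then show ?thesis
      using remove_vertex_non_nbr[OF v(1) \<open>v \<noteq> z\<close> 1] in_z by (simp add: expected_indeg_def)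
  next
    case 2
    then have "v \<in> bverts (remove_vertex F z)"
      using boundary_nbr_stays_boundary \<open>v \<noteq> z\<close> v(2) by blast
    then show ?thesis
      using 2 in_z bverts_subset_verts[of "remove_vertex F z"] v(2) by (auto simp: expected_indeg_def)
  next
    case 3
    then have "v \<in> bverts (remove_vertex F z)"
      using interior_nbr_becomes_boundary \<open>v \<noteq> z\<close> by blast
    then show ?thesis
      using 3 in_z bverts_subset_verts[of "remove_vertex F z"] v(2) by (auto simp: expected_indeg_def)
  qed
qed

lemma indeg_orient_step:
  assumes root': "(v1,v2) \<in> bdarts (remove_vertex F z)"
    and A: "near_3_orientation (remove_vertex F z) v1 v2 A" and v: "v \<in> verts F"
  shows "indeg (orient_at F z \<union> A) v = expected_indeg F v1 v2 v"
proof -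
  let ?F' = "remove_vertex F z"
  have wf': "wf_faces ?F'" using wf_faces_remove_vertex[OF wf] .
  have z_no_arcs: "(u,z) \<notin> A" "(z,u) \<notin> A" for u
    using near_3_orientation_arc_verts[OF wf' A] removed_vertex_notin_verts[of z F] by blast+
  consider "v = z" | "v \<in> {v1,v2}" | "v \<notin> {v1,v2,z}" by blast
  then show ?thesis
  proof cases
    case 1
    then show ?thesis
      using z_no_arcs indeg_orient_at_z z_bverts distinct_v1_v2_z
      by (simp add: expected_indeg_def)
  next
    case 2
    then have "v \<noteq> z" "v \<in> bverts F"
      using distinct_v1_v2_z v1_bverts v2_bverts by auto
    have "v \<in> bverts ?F'"
      using root' 2 bdarts_target_bverts[OF wf'] by (auto simp: bverts_iff)
    then have "{u. (u,v) \<in> A} = {}"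
      using near_3_orientation_no_in_root[OF wf' A] 2 by blast
    moreover have "{u. (u,v) \<in> orient_at F z} = {}"
      using in_orient_at[OF \<open>v \<noteq> z\<close>] \<open>v \<in> bverts F\<close> by simp
    ultimately show ?thesis
      using 2 \<open>v \<in> bverts F\<close> by (simp add: expected_indeg_def)
  next
    case 3
    then have "v \<noteq> z" by simp
    have "{u. (u,v) \<in> orient_at F z} \<subseteq> {z}"
      using in_orient_at[OF \<open>v \<noteq> z\<close>] by simp
    then have "indeg (orient_at F z \<union> A) v = indeg (orient_at F z) v + indeg A v"
      using near_3_orientation_finite_in[OF wf' A] z_no_arcs
      by (intro indeg_Un_disjoint) (auto intro: finite_subset)
    then show ?thesis
      using remove_vertex_indeg_balance[OF v 3] near_3_orientation_indeg[OF wf' A] by simp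
  qed
qed

lemma near_3_orientation_orient_step:
  assumes root': "(v1,v2) \<in> bdarts (remove_vertex F z)"
    and A: "near_3_orientation (remove_vertex F z) v1 v2 A"
  shows "near_3_orientation F v1 v2 (orient_at F z \<union> A)"
proof -
  have wf': "wf_faces (remove_vertex F z)" using wf_faces_remove_vertex[OF wf] .
  have "{e \<in> edges F. z \<in> e} \<inter> (edges (remove_vertex F z) - {{v1,v2}}) = {}"
    using edges_remove_vertex[of _ F z] by blast
  then have "orients (orient_at F z \<union> A) (edges F - {{v1,v2}})"
    unfolding edges_remove_vertex_split
    by (rule orients_Un[OF orients_orient_at near_3_orientation_orients[OF wf' A]])
  with indeg_orient_step[OF root' A] show ?thesis
    unfolding near_3_orientation_def by blast
qed

lemma near_3_orientation_orient_last:
  assumes empty: "remove_vertex F z = {}"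
  shows "near_3_orientation F v1 v2 (orient_at F z)"
proof -
  have "edges F - {{v1,v2}} = {e \<in> edges F. z \<in> e}"
    using edges_remove_vertex_split empty by (simp add: edges_def darts_def)
  then have orient: "orients (orient_at F z) (edges F - {{v1,v2}})"
    using orients_orient_at by simp
  have "indeg (orient_at F z) v = expected_indeg F v1 v2 v" if v: "v \<in> verts F" for v
  proof (cases "v = z")
    case True
    then show ?thesis
      using indeg_orient_at_z z_bverts distinct_v1_v2_z by (simp add: expected_indeg_def)
  next
    case False
    then have "v \<in> {v1,v2}"
      using remove_vertex_indeg_balance[OF v] empty by (auto simp: verts_def)
    then have "v \<in> bverts F"
      using v1_bverts v2_bverts by auto
    then show ?thesis
      using in_orient_at[OF False] \<open>v \<in> {v1,v2}\<close> by (auto simp: expected_indeg_def)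
  qed
  with orient show ?thesis
    unfolding near_3_orientation_def by blast
qed

end


section \<open>Runs of the procedure\<close>

lemma proc_root: "proc F v1 v2 A \<Longrightarrow> (v1,v2) \<in> bdarts F"
  by (induction rule: proc.induct) auto

lemma proc_near_3_orientation:
  assumes "proc F v1 v2 A" and tg: "triangular_graph T" and "near_triangulation_in T F"
  shows "near_3_orientation F v1 v2 A"
  using assms(1,3)
proof (induction rule: proc.induct)
  case (chord_step v1 v2 F x y F1 F2 A1 A2)
  interpret chord_split T F1 F2 x y v1 v2
    using chord_step.prems chord_step.hyps(1-4,7-11) unfolding chord_step.hyps(3)
    by unfold_locales
  have "near_3_orientation F1 v1 v2 A1" "near_3_orientation F2 x y A2"
    using chord_step.IH near_triangulation_in_halves by simp_all
  then show ?case
    unfolding chord_step.hyps(3) by (rule near_3_orientation_chord)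
next
  case (orient_last v1 v2 F z)
  interpret orienting_step T F v1 v2 z
    using tg orient_last by unfold_locales
  show ?case
    using near_3_orientation_orient_last orient_last.hyps(4) by (simp add: remove_vertex_def)
next
  case (orient_step v1 v2 F z F' A')
  interpret orienting_step T F v1 v2 z
    using tg orient_step by unfold_locales
  have "F' = remove_vertex F z"
    using orient_step.hyps(4) by (simp add: remove_vertex_def)
  then show ?case
    using near_3_orientation_orient_step proc_root[OF orient_step.hyps(6)]
      orient_step.IH near_triangulation_in_remove_vertex by simp
qed


section \<open>The outer face\<close>

text \<open>Removing the outer face cuts the cyclic link of a corner a open at the arc from b to c, so
  the remaining link is a path starting at c.\<close>
lemma sym_connected_link_remove_face_corner:
  assumes tg: "triangular_graph T" and abc: "(a,b,c) \<in> T"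
  shows "sym_connected (link (T - {(a,b,c),(b,c,a),(c,a,b)}) a)" (is "sym_connected (link ?F a)")
proof (rule sym_connected_if_reach_from)
  have wfT: "wf_faces T" using triangular_graph_wf_faces[OF tg] .
  have "a \<noteq> b" "a \<noteq> c" using face_distinct[OF wfT abc] by auto
  then have sub: "{(x,y) \<in> link T a. y \<noteq> c} \<subseteq> link ?F a"
    by (auto simp: link_iff)
  have "(c,a) \<in> darts T"
    using face_rotate2[OF wfT abc] by (auto simp: darts_iff)
  then have "(a,c) \<in> darts T"
    by (rule triangular_graph_darts_sym[OF tg])
  fix u assume "u \<in> Field (link ?F a)"
  then have "u \<in> Field (link T a)"
    by (auto simp: Field_def link_iff)
  then have "(a,u) \<in> darts T"
    by (simp add: triangular_graph_Field_link[OF tg])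
  then have "(c,u) \<in> (link T a)\<^sup>*"
    using triangular_graph_link_reach[OF tg \<open>(a,c) \<in> darts T\<close>] by blast
  then have "(c,u) \<in> {(x,y) \<in> link T a. y \<noteq> c}\<^sup>*"
    by (rule rtrancl_not_reentering)
  then show "(c,u) \<in> (link ?F a)\<^sup>*"
    using rtrancl_mono[OF sub] by blast
qed

lemma twin_faces_darts:
  assumes tg: "triangular_graph T" and f: "(s,x,y) \<in> T" "(s,y,x) \<in> T" and st: "(s,t) \<in> darts T"
  shows "t \<in> {x,y}"
proof -
  have wfT: "wf_faces T" using triangular_graph_wf_faces[OF tg] .
  have "(s,x) \<in> darts T" using f(1) by (auto simp: darts_iff)
  then have "(x,t) \<in> (link T s)\<^sup>*"
    using triangular_graph_link_reach[OF tg _ st] by blast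
  then show ?thesis
  proof (induction rule: rtrancl_induct)
    case (step t t')
    then show ?case
      using face_unique[OF wfT] f by (auto simp: link_iff)
  qed simp
qed

lemma twin_faces_verts:
  assumes tg: "triangular_graph T" and f: "(v,q,z) \<in> T" "(v,z,q) \<in> T"
  shows "verts T \<subseteq> {v,q,z}"
proof
  have wfT: "wf_faces T" using triangular_graph_wf_faces[OF tg] .
  have closed: "t \<in> {v,q,z}" if "s \<in> {v,q,z}" "(s,t) \<in> darts T" for s t
  proof -
    have "(q,z,v) \<in> T" "(q,v,z) \<in> T" "(z,v,q) \<in> T" "(z,q,v) \<in> T"
      using face_rotate[OF wfT] face_rotate2[OF wfT] f by blast+
    then show ?thesis
      using that twin_faces_darts[OF tg] f by blast
  qed
  fix x assume "x \<in> verts T"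
  moreover have "v \<in> verts T" using f(1) by (auto simp: verts_iff)
  ultimately have "(v,x) \<in> (darts T)\<^sup>*"
    using triangular_graph_darts_connected[OF tg] by blast
  then show "x \<in> {v,q,z}"
  proof (induction rule: rtrancl_induct)
    case (step y y')
    then show ?case using closed by blast
  qed simp
qed

locale outer_face =
  fixes T :: "('v \<times> 'v \<times> 'v) set" and a b c :: 'v
  assumes tg: "triangular_graph T" and abc: "(a,b,c) \<in> T"
begin

abbreviation inner_faces :: "('v \<times> 'v \<times> 'v) set" where
  "inner_faces \<equiv> T - {(a,b,c),(b,c,a),(c,a,b)}"

lemma wfT: "wf_faces T"
  using triangular_graph_wf_faces[OF tg] .

lemma distinct_abc: "a \<noteq> b" "b \<noteq> c" "a \<noteq> c"
  using face_distinct[OF wfT abc] by auto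

lemma outer_face_rotations: "(b,c,a) \<in> T" "(c,a,b) \<in> T"
  using face_rotate[OF wfT abc] face_rotate2[OF wfT abc] .

lemma twin_faces_degenerate:
  assumes "\<not> no_twin_faces T"
  shows "verts T \<subseteq> {a,b,c}" and "edges T \<subseteq> {{a,b},{b,c},{c,a}}"
proof -
  obtain v q z where "(v,q,z) \<in> T" "(v,z,q) \<in> T"
    using assms by (auto simp: no_twin_faces_def)
  then have sub: "verts T \<subseteq> {v,q,z}" by (rule twin_faces_verts[OF tg])
  have abc_verts: "{a,b,c} \<subseteq> verts T"
    using abc outer_face_rotations by (auto simp: verts_iff)
  have "card {v,q,z} \<le> card {a,b,c}"
    using distinct_abc by (simp add: card_insert_if)
  then show verts: "verts T \<subseteq> {a,b,c}"
    using card_seteq[of "{v,q,z}" "{a,b,c}"] sub abc_verts by auto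
  show "edges T \<subseteq> {{a,b},{b,c},{c,a}}"
  proof
    fix e assume "e \<in> edges T"
    then obtain s t where "e = {s,t}" "(s,t) \<in> darts T" by (auto simp: edges_iff)
    moreover have "s \<noteq> t" "s \<in> {a,b,c}" "t \<in> {a,b,c}"
      using calculation(2) dart_ne[OF wfT] dart_verts[OF wfT] verts by blast+
    ultimately show "e \<in> {{a,b},{b,c},{c,a}}" by (auto simp: insert_commute)
  qed
qed

lemma wf_inner_faces: "wf_faces inner_faces"
proof (rule wf_faces_subset[OF wfT])
  show "rot_closed inner_faces"
    unfolding rot_closed_def
  proof (intro allI impI)
    fix x y u assume "(x,y,u) \<in> inner_faces"
    then show "(y,u,x) \<in> inner_faces"
      using face_rotate[OF wfT, of x y u] by auto
  qed
qed blast

lemma near_triangulation_in_inner_faces: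
  assumes "no_twin_faces T"
  shows "near_triangulation_in T inner_faces"
proof -
  have "sym_connected (link inner_faces v)" for v
  proof -
    have "{(a,b,c),(b,c,a),(c,a,b)} = {(b,c,a),(c,a,b),(a,b,c)}"
      and "{(a,b,c),(b,c,a),(c,a,b)} = {(c,a,b),(a,b,c),(b,c,a)}"
      by auto
    then have corners: "sym_connected (link inner_faces a)" "sym_connected (link inner_faces b)"
      "sym_connected (link inner_faces c)"
      using sym_connected_link_remove_face_corner[OF tg] abc outer_face_rotations by metis+
    have "link inner_faces v = link T v" if "v \<notin> {a,b,c}"
      using that by (auto simp: link_iff)
    then show ?thesis
      using corners triangular_graph_sym_connected_link[OF tg] by (cases "v \<in> {a,b,c}") auto
  qed
  moreover have "no_twin_faces inner_faces"
    using assms unfolding no_twin_faces_def by blast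
  ultimately show ?thesis
    using wf_inner_faces by (simp add: near_triangulation_in_def)
qed

lemma inner_faces_outer_darts: "(s,t) \<in> darts T \<Longrightarrow> (s,t) \<notin> darts inner_faces \<Longrightarrow> (s,t) \<in> {(a,b),(b,c),(c,a)}"
  by (auto simp: darts_iff)

lemma inner_faces_bdarts: "bdarts inner_faces \<subseteq> {(b,a),(c,b),(a,c)}"
proof
  fix p assume "p \<in> bdarts inner_faces"
  then obtain s t where p: "p = (s,t)" "(s,t) \<in> darts T" "(t,s) \<notin> darts inner_faces"
    by (cases p) (auto simp: bdarts_iff darts_iff)
  then have "(t,s) \<in> darts T" using triangular_graph_darts_sym[OF tg] by blast
  then show "p \<in> {(b,a),(c,b),(a,c)}"
    using inner_faces_outer_darts p by blast
qed

lemma inner_faces_edges: "edges T - {{a,b},{b,c},{c,a}} \<subseteq> edges inner_faces"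
proof
  fix e assume e: "e \<in> edges T - {{a,b},{b,c},{c,a}}"
  then obtain s t where st: "e = {s,t}" "(s,t) \<in> darts T" by (auto simp: edges_iff)
  then have "(s,t) \<in> darts inner_faces"
    using inner_faces_outer_darts e by auto
  then show "e \<in> edges inner_faces" using st(1) by (auto simp: edges_iff)
qed

lemma inner_faces_interior_vertex:
  assumes "v \<in> verts T - {a,b,c}"
  shows "v \<in> verts inner_faces - bverts inner_faces"
proof -
  have "v \<in> verts inner_faces"
    using assms by (auto simp: verts_iff)
  moreover have "v \<notin> bverts inner_faces"
    using assms inner_faces_bdarts by (auto simp: bverts_iff)
  ultimately show ?thesis by blast
qed

lemma internal_3_orientation_from_inner_faces:
  assumes A: "near_3_orientation inner_faces v1 v2 A" and root: "(v1,v2) \<in> bdarts inner_faces"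
    and d: "d \<in> {(v1,v2),(v2,v1)}"
  shows "(\<forall>e \<in> edges T - {{a,b},{b,c},{c,a}}. \<exists>!p. p \<in> insert d A \<and> {fst p, snd p} = e)
       \<and> (\<forall>v \<in> verts T - {a,b,c}.
            card {u. (u,v) \<in> insert d A \<and> {u,v} \<in> edges T - {{a,b},{b,c},{c,a}}} = 3)"
proof (intro conjI ballI)
  have "(v1,v2) \<in> {(b,a),(c,b),(a,c)}"
    using root inner_faces_bdarts by blast
  then have root_outer: "{v1,v2} \<in> {{a,b},{b,c},{c,a}}" and "snd d \<in> {a,b,c}"
    using d by (auto simp: insert_commute)
  have d_edge: "{fst d, snd d} = {v1,v2}"
    using d by (auto simp: insert_commute)
  fix e assume e: "e \<in> edges T - {{a,b},{b,c},{c,a}}"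
  then have "e \<in> edges inner_faces - {{v1,v2}}"
    using inner_faces_edges root_outer by blast
  then have "\<exists>!p. p \<in> A \<and> {fst p, snd p} = e"
    using near_3_orientation_orients[OF wf_inner_faces A] by (simp add: orients_def)
  moreover have "{fst d, snd d} \<noteq> e"
    using d_edge e root_outer by auto
  then have "p \<in> insert d A \<and> {fst p, snd p} = e \<longleftrightarrow> p \<in> A \<and> {fst p, snd p} = e" for p
    by auto
  ultimately show "\<exists>!p. p \<in> insert d A \<and> {fst p, snd p} = e"
    by simp
next
  fix v assume v: "v \<in> verts T - {a,b,c}"
  have "(v1,v2) \<in> {(b,a),(c,b),(a,c)}"
    using root inner_faces_bdarts by blast
  then have "(u,v) \<noteq> d" for u
    using d v by auto
  moreover have "{u,v} \<in> edges T - {{a,b},{b,c},{c,a}}" if "(u,v) \<in> A" for u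
    using near_3_orientation_arc_edge[OF wf_inner_faces A that] edges_mono[of inner_faces T] v
    by (auto simp: doubleton_eq_iff)
  ultimately have "{u. (u,v) \<in> insert d A \<and> {u,v} \<in> edges T - {{a,b},{b,c},{c,a}}} =
      {u. (u,v) \<in> A}"
    by (intro Collect_cong) (metis insert_iff)
  moreover have "indeg A v = 3"
    using near_3_orientation_indeg[OF wf_inner_faces A] inner_faces_interior_vertex[OF v]
    by (simp add: expected_indeg_def)
  ultimately show "card {u. (u,v) \<in> insert d A \<and> {u,v} \<in> edges T - {{a,b},{b,c},{c,a}}} = 3"
    by simp
qed

end

theorem proposition4p1:
  fixes T :: "('v \<times> 'v \<times> 'v) set" and a b c v1 v2 :: 'v
    and d :: "'v \<times> 'v" and Ors :: "('v \<times> 'v) set"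
  assumes "triangular_graph T"
    and "(a,b,c) \<in> T"
    and "(v1,v2) \<in> bdarts (T - {(a,b,c),(b,c,a),(c,a,b)})"
    and "d \<in> {(v1,v2),(v2,v1)}"
    and "proc (T - {(a,b,c),(b,c,a),(c,a,b)}) v1 v2 Ors"
  shows "(\<forall>e \<in> edges T - {{a,b},{b,c},{c,a}}.
            \<exists>!p. p \<in> insert d Ors \<and> {fst p, snd p} = e)
       \<and> (\<forall>v \<in> verts T - {a,b,c}.
            card {u. (u,v) \<in> insert d Ors \<and> {u,v} \<in> edges T - {{a,b},{b,c},{c,a}}} = 3)"
proof -
  interpret outer_face T a b c
    using assms(1,2) by unfold_locales
  show ?thesis
  proof (cases "no_twin_faces T")
    case False
    \<comment> \<open>twin faces leave T no vertices besides a, b, c, so the claim is vacuous\<close>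
    then have no_edges: "edges T - {{a,b},{b,c},{c,a}} = {}"
      and no_verts: "verts T - {a,b,c} = {}"
      using twin_faces_degenerate by auto
    show ?thesis
      unfolding no_edges no_verts by simp
  next
    case True
    then have "near_3_orientation inner_faces v1 v2 Ors"
      by (intro proc_near_3_orientation[OF assms(5) tg] near_triangulation_in_inner_faces)
    then show ?thesis
      by (rule internal_3_orientation_from_inner_faces[OF _ assms(3,4)])
  qed
qed

end
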